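(* Let $(\mathcal V,\mathcal W,\lambda)$ be a FTvN system with center $C$, and let $D:\mathcal V\to\mathcal V$ be a doubly stochastic transformation that has an adjoint $D^*$. Then: (a) For every convex spectral set $K$, $D(K)\subseteq K$. (b) For every $u\in C$, $Du=u$ and $D^*u=u$. In particular, if $e$ is a unit element of the system, then $De=e$ and $D^*e=e$. (c) If $\mathcal V$ is finite dimensional, then $D^*x\prec x$ for all $x\in\mathcal V$.
   Context: A Fan-Theobald-von Neumann (FTvN) system is a triple $(\mathcal V,\mathcal W,\lambda)$ where $\mathcal V,\mathcal W$ are real inner product spaces and $\lambda:\mathcal V\to\mathcal W$ is a map such that: (A1) $\|\lambda(x)\|=\|x\|$ for all $x$; (A2) $\langle x,y\rangle\le\langle\lambda(x),\lambda(y)\rangle$ for all $x,y$; (A3) for every $c\in\mathcal V$ and $q\in\lambda(\mathcal V)$ there exists $x$ with $\lambda(x)=q$ and $\langle c,x\rangle=\langle\lambda(c),\lambda(x)\rangle$. The $\lambda$-orbit of $u$ is $[u]=\{z:\lambda(z)=\lambda(u)\}$; a set $E$ is spectral if $x\in E\Rightarrow [x]\subseteq E$. Majorization: $x\prec y$ iff $x\in\operatorname{conv}[y]$. A linear map $D:\mathcal V\to\mathcal V$ is doubly stochastic if $Dx\prec x$ for all $x\in\mathcal V$. The adjoint $D^*$ satisfies $\langle D^*x,y\rangle=\langle x,Dy\rangle$ for all $x,y$. Elements $x,y$ commute if $\langle x,y\rangle=\langle\lambda(x),\lambda(y)\rangle$; the center $C$ is the set of elements commuting with all of $\mathcal V$;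 a unit element is a nonzero $e$ with $C=\mathbb R e$. *)

theory Defs
  imports "HOL-Analysis.Analysis"
begin

definition FTvN :: "('v::real_inner \<Rightarrow> 'w::real_inner) \<Rightarrow> bool" where
  "FTvN lam \<longleftrightarrow>
     (\<forall>x. norm (lam x) = norm x) \<and>
     (\<forall>x y. inner x y \<le> inner (lam x) (lam y)) \<and>
     (\<forall>c q. q \<in> range lam \<longrightarrow> (\<exists>x. lam x = q \<and> inner c x = inner (lam c) (lam x)))"

definition orbit :: "('v \<Rightarrow> 'w) \<Rightarrow> 'v \<Rightarrow> 'v set" where
  "orbit lam u = {z. lam z = lam u}"

definition spectral :: "('v \<Rightarrow> 'w) \<Rightarrow> 'v set \<Rightarrow> bool" where
  "spectral lam E \<longleftrightarrow> (\<forall>x\<in>E. orbit lam x \<subseteq> E)"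

definition majorized :: "('v::real_vector \<Rightarrow> 'w) \<Rightarrow> 'v \<Rightarrow> 'v \<Rightarrow> bool" where
  "majorized lam x y \<longleftrightarrow> x \<in> convex hull (orbit lam y)"

definition doubly_stochastic :: "('v::real_vector \<Rightarrow> 'w) \<Rightarrow> ('v \<Rightarrow> 'v) \<Rightarrow> bool" where
  "doubly_stochastic lam D \<longleftrightarrow> linear D \<and> (\<forall>x. majorized lam (D x) x)"

definition commute :: "('v::real_inner \<Rightarrow> 'w::real_inner) \<Rightarrow> 'v \<Rightarrow> 'v \<Rightarrow> bool" where
  "commute lam x y \<longleftrightarrow> inner x y = inner (lam x) (lam y)"

definition center :: "('v::real_inner \<Rightarrow> 'w::real_inner) \<Rightarrow> 'v set" where
  "center lam = {u. \<forall>x. commute lam u x}"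

definition unit_element :: "('v::real_inner \<Rightarrow> 'w::real_inner) \<Rightarrow> 'v \<Rightarrow> bool" where
  "unit_element lam e \<longleftrightarrow> e \<noteq> 0 \<and> center lam = range (\<lambda>t::real. t *\<^sub>R e)"

end

theory Submission
  imports Defs
begin

(*
  Parts (a) and (b) rest on one observation: D x lies in the convex hull of the orbit [x].
  Convex spectral sets contain these hulls, and the orbit of a central element u is {u},
  so D u = u. Moreover, the linear functional <u, _> is constant on every orbit, hence
  <D* u, y> = <u, D y> = <u, y> for all y, i.e. D* u = u.

  For (c), the orbit [x] is closed and bounded, hence compact in finite dimension, and by
  Caratheodory's theorem so is conv [x]. If D* x were not in conv [x], some c would
  separate them strictly. Axiom (A3) yields z in [x] commuting with c, and then
  <lam c, lam x> = <c, z> < <c, D* x> = <x, D c> <= <lam x, lam c>, since D c is a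
  convex combination of elements of [c]: a contradiction.
*)

lemma orthogonal_expansion:
  fixes C :: "'a::real_inner set"
  assumes "finite C" "pairwise orthogonal C" "z \<in> span C"
  shows "(\<Sum>u\<in>C. (inner z u / inner u u) *\<^sub>R u) = z"
proof -
  define s where "s = (\<Sum>u\<in>C. (inner z u / inner u u) *\<^sub>R u)"
  have "orthogonal (z - s) x" if "x \<in> C" for x
  proof -
    have "inner s x = (\<Sum>u\<in>C. inner z u / inner u u * inner u x)"
      by (simp add: s_def inner_sum_left)
    also have "\<dots> = (\<Sum>u\<in>C. if u = x then inner z x / inner x x * inner x x else 0)"
      using assms(2) that by (intro sum.cong) (auto simp: pairwise_def orthogonal_def)
    also have "\<dots> = inner z x"
      using assms(1) that by (cases "x = 0") auto
    finally show ?thesis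
      by (simp add: orthogonal_def inner_diff_left)
  qed
  moreover have "z - s \<in> span C"
    using assms(3) by (simp add: s_def span_diff span_sum span_base span_scale)
  ultimately have "orthogonal (z - s) (z - s)"
    by (metis orthogonal_commute orthogonal_to_span)
  then show ?thesis
    by (simp add: s_def orthogonal_def)
qed

lemma compact_if_closed_bounded_finite_span:
  fixes B S :: "'a::real_inner set"
  assumes "finite B" "span B = UNIV" "closed S" "bounded S"
  shows "compact S"
proof -
  obtain C :: "'a set" where C: "finite C" "span C = UNIV" "pairwise orthogonal C"
    using basis_orthogonal[OF assms(1)] assms(2) by metis
  obtain r where r: "\<forall>z\<in>S. norm z \<le> r"
    using assms(4) bounded_iff by blast
  \<comment> \<open>Indexing coefficients by all vectors makes the box a product over UNIV;
    at u = 0 the bound r / norm u and the coefficient inner z u / inner u u are both 0.\<close>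
  define box where "box = Pi UNIV (\<lambda>u::'a. cball (0::real) (r / norm u))"
  define combine where "combine f = (\<Sum>u\<in>C. f u *\<^sub>R u)" for f :: "'a \<Rightarrow> real"
  have "compact box"
    using compactin_PiE[of "\<lambda>_. euclidean" UNIV "\<lambda>u::'a. cball (0::real) (r / norm u)"]
    by (simp add: box_def euclidean_product_topology PiE_UNIV_domain)
  moreover have "continuous_on box combine"
    unfolding combine_def
    by (intro continuous_on_sum continuous_on_scaleR continuous_on_const
        continuous_on_subset[OF continuous_on_product_coordinates]) simp
  ultimately have "compact (combine ` box)"
    by (rule compact_continuous_image[rotated])
  moreover have "S \<subseteq> combine ` box"
  proof
    fix z assume "z \<in> S"
    have "\<bar>inner z u / inner u u\<bar> \<le> r / norm u" for u :: 'a
    proof (cases "u = 0")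
      case False
      have "\<bar>inner z u\<bar> \<le> r * norm u"
        using Cauchy_Schwarz_ineq2[of z u] r \<open>z \<in> S\<close> by (meson mult_right_mono norm_ge_zero order_trans)
      then show ?thesis
        using False by (simp add: abs_divide divide_simps power2_norm_eq_inner[symmetric] power2_eq_square)
    qed (use r \<open>z \<in> S\<close> in \<open>auto intro: order_trans[OF norm_ge_zero]\<close>)
    then have "(\<lambda>u. inner z u / inner u u) \<in> box"
      by (simp add: box_def)
    moreover have "z = combine (\<lambda>u. inner z u / inner u u)"
      using orthogonal_expansion[OF C(1,3)] C(2) by (simp add: combine_def)
    ultimately show "z \<in> combine ` box" by blast
  qed
  ultimately show ?thesis
    using compact_Int_closed[OF _ assms(3)] by (metis inf.absorb2)
qed

lemma affine_dependent_if_card_gt: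
  fixes B S :: "'a::real_vector set"
  assumes "finite B" "span B = UNIV" "finite S" "card B + 1 < card S"
  shows "affine_dependent S"
proof (rule ccontr)
  assume indep: "\<not> affine_dependent S"
  obtain a where a: "a \<in> S"
    using assms(4) by fastforce
  have "independent ((\<lambda>x. - a + x) ` (S - {a}))"
    using indep affine_dependent_iff_dependent2[OF a] by simp
  then have "card ((\<lambda>x. - a + x) ` (S - {a})) \<le> card B"
    using independent_span_bound[OF assms(1)] assms(2) by simp
  moreover have "card ((\<lambda>x. - a + x) ` (S - {a})) = card S - 1"
    using a assms(3) by (simp add: card_image)
  ultimately show False
    using assms(4) by linarith
qed

lemma convex_hull_affine_dependent_remove:
  fixes S :: "'a::real_vector set"
  assumes "finite S" "affine_dependent S" "y \<in> convex hull S"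
  obtains a where "a \<in> S" "y \<in> convex hull (S - {a})"
proof -
  obtain u where u: "\<forall>v\<in>S. 0 \<le> u v" "sum u S = 1" "(\<Sum>v\<in>S. u v *\<^sub>R v) = y"
    using assms(3) convex_hull_finite[OF assms(1)] by auto
  obtain w where w: "sum w S = 0" "\<exists>v\<in>S. w v \<noteq> 0" "(\<Sum>v\<in>S. w v *\<^sub>R v) = 0"
    using assms(2) affine_dependent_explicit_finite[OF assms(1)] by auto
  define P where "P = {v\<in>S. 0 < w v}"
  have "P \<noteq> {}"
  proof
    assume "P = {}"
    then have "\<forall>v\<in>S. w v \<le> 0"
      by (auto simp: P_def not_less)
    then have "\<forall>v\<in>S. w v = 0"
      using sum_nonneg_eq_0_iff[OF assms(1), of "\<lambda>v. - w v"] w(1) by (simp add: sum_negf)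
    with w(2) show False by blast
  qed
  then obtain a where a: "a \<in> P" and a_min: "\<And>v. v \<in> P \<Longrightarrow> u a / w a \<le> u v / w v"
    using ex_is_arg_min_if_finite[of P "\<lambda>v. u v / w v"] assms(1)
    by (auto simp: P_def is_arg_min_linorder)
  \<comment> \<open>Shift the weights along w until the first of them, the one at a, reaches 0.\<close>
  define t where "t = u a / w a"
  define u' where "u' v = u v - t * w v" for v
  have "t \<ge> 0"
    using a u(1) by (simp add: t_def P_def)
  have u'_nonneg: "0 \<le> u' v" if "v \<in> S" for v
  proof (cases "0 < w v")
    case True
    then have "t \<le> u v / w v"
      using a_min that by (simp add: t_def P_def)
    then show ?thesis
      using True by (simp add: u'_def pos_le_divide_eq mult.commute)
  next
    case False
    then have "t * w v \<le> 0"
      using \<open>t \<ge> 0\<close> by (simp add: mult_nonneg_nonpos)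
    moreover have "0 \<le> u v"
      using u(1) that by blast
    ultimately show ?thesis
      by (simp add: u'_def)
  qed
  have "u' a = 0"
    using a by (simp add: u'_def t_def P_def)
  have "sum u' S = 1"
    using u(2) w(1) by (simp add: u'_def sum_subtractf flip: sum_distrib_left)
  moreover have "(\<Sum>v\<in>S. u' v *\<^sub>R v) = y"
    using u(3) w(3)
    by (simp add: u'_def scaleR_diff_left sum_subtractf flip: scaleR_scaleR scaleR_right.sum)
  ultimately have "sum u' (S - {a}) = 1" "(\<Sum>v\<in>S - {a}. u' v *\<^sub>R v) = y"
    using a \<open>u' a = 0\<close> assms(1) by (simp_all add: P_def sum_diff1)
  then have "y \<in> convex hull (S - {a})"
    using u'_nonneg assms(1) by (auto simp: convex_hull_finite)
  with a that show thesis
    unfolding P_def by blast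
qed

lemma caratheodory_finite_span:
  fixes B K :: "'a::real_vector set"
  assumes "finite B" "span B = UNIV" "y \<in> convex hull K"
  obtains S where "finite S" "S \<subseteq> K" "card S \<le> card B + 1" "y \<in> convex hull S"
proof -
  have "\<exists>S\<subseteq>T. card S \<le> card B + 1 \<and> y \<in> convex hull S"
    if "finite T" "y \<in> convex hull T" for T
    using that
  proof (induction "card T" arbitrary: T rule: less_induct)
    case less
    show ?case
    proof (cases "card T \<le> card B + 1")
      case False
      then have "affine_dependent T"
        using affine_dependent_if_card_gt[OF assms(1,2) less.prems(1)] by simp
      then obtain a where a: "a \<in> T" "y \<in> convex hull (T - {a})"
        using convex_hull_affine_dependent_remove less.prems by blast
      have "card (T - {a}) < card T"
        by (rule card_Diff1_less[OF less.prems(1) a(1)])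
      then show ?thesis
        using less.hyps[of "T - {a}"] less.prems(1) a(2) by blast
    qed (use less.prems in blast)
  qed
  moreover obtain T where "finite T" "T \<subseteq> K" "y \<in> convex hull T"
    using assms(3) by (auto simp: convex_hull_explicit convex_hull_finite)
  ultimately show thesis
    using that by (meson finite_subset order_trans)
qed

primrec iterated_joins :: "'a::real_vector set \<Rightarrow> nat \<Rightarrow> 'a set" where
  "iterated_joins K 0 = K"
| "iterated_joins K (Suc n) =
     {(1 - u) *\<^sub>R x + u *\<^sub>R y | x y u. 0 \<le> u \<and> u \<le> 1 \<and> x \<in> K \<and> y \<in> iterated_joins K n}"

lemma compact_iterated_joins:
  fixes K :: "'a::real_normed_vector set"
  assumes "compact K"
  shows "compact (iterated_joins K n)"
  by (induction n) (simp_all add: assms compact_convex_combinations)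

lemma iterated_joins_subset_convex_hull: "iterated_joins K n \<subseteq> convex hull K"
proof (induction n)
  case (Suc n)
  have "(1 - u) *\<^sub>R x + u *\<^sub>R y \<in> convex hull K"
    if "0 \<le> u" "u \<le> 1" "x \<in> K" "y \<in> convex hull K" for x y u
    using that by (intro convexD_alt[OF convex_convex_hull hull_inc])
  with Suc show ?case by auto
qed (simp add: hull_subset)

lemma iterated_joins_SucI:
  assumes "x \<in> K" "y \<in> iterated_joins K n" "0 \<le> u" "u \<le> 1"
  shows "(1 - u) *\<^sub>R x + u *\<^sub>R y \<in> iterated_joins K (Suc n)"
  using assms by auto

lemma convex_hull_subset_iterated_joins:
  assumes "finite S" "S \<noteq> {}" "S \<subseteq> K" "card S \<le> Suc n"
  shows "convex hull S \<subseteq> iterated_joins K n"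
  using assms
proof (induction n arbitrary: S)
  case 0
  then have "card S = 1"
    using card_gt_0_iff[of S] by simp
  then obtain a where "S = {a}"
    by (rule card_1_singletonE)
  with 0 show ?case by simp
next
  case (Suc n)
  obtain a where a: "a \<in> S"
    using Suc.prems(2) by blast
  have "a \<in> K"
    using a Suc.prems(3) by blast
  show ?case
  proof (cases "S - {a} = {}")
    case True
    then have "S = {a}" using a by blast
    have "a \<in> iterated_joins K n"
      using Suc.IH[of "{a}"] \<open>a \<in> K\<close> by simp
    then have "(1 - 1) *\<^sub>R a + 1 *\<^sub>R a \<in> iterated_joins K (Suc n)"
      by (intro iterated_joins_SucI[OF \<open>a \<in> K\<close>]) simp_all
    then show ?thesis
      by (simp add: \<open>S = {a}\<close>)
  next
    case False
    have "card (S - {a}) \<le> Suc n"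
      using Suc.prems(1,4) a by (simp add: card_Diff_singleton)
    moreover have "S - {a} \<subseteq> K"
      using Suc.prems(3) by blast
    ultimately have IH: "convex hull (S - {a}) \<subseteq> iterated_joins K n"
      using Suc.prems(1) False by (intro Suc.IH) simp_all
    have "S = insert a (S - {a})"
      using a by blast
    then have hull_S: "convex hull S =
        {(1 - u) *\<^sub>R a + u *\<^sub>R x |x u. 0 \<le> u \<and> u \<le> 1 \<and> x \<in> convex hull (S - {a})}"
      using False convex_hull_insert_alt[of a "S - {a}"] by simp
    show ?thesis
    proof
      fix y assume "y \<in> convex hull S"
      then obtain x u where "y = (1 - u) *\<^sub>R a + u *\<^sub>R x" "0 \<le> u" "u \<le> 1"
          "x \<in> convex hull (S - {a})"
        unfolding hull_S by blast
      with IH show "y \<in> iterated_joins K (Suc n)"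
        using iterated_joins_SucI[OF \<open>a \<in> K\<close>] by blast
    qed
  qed
qed

lemma compact_convex_hull_finite_span:
  fixes B K :: "'a::real_normed_vector set"
  assumes "finite B" "span B = UNIV" "compact K"
  shows "compact (convex hull K)"
proof -
  have "convex hull K \<subseteq> iterated_joins K (card B)"
  proof
    fix y assume "y \<in> convex hull K"
    then obtain S where S: "finite S" "S \<subseteq> K" "card S \<le> card B + 1" "y \<in> convex hull S"
      by (rule caratheodory_finite_span[OF assms(1,2)])
    then have "S \<noteq> {}"
      by auto
    with S have "convex hull S \<subseteq> iterated_joins K (card B)"
      by (intro convex_hull_subset_iterated_joins) simp_all
    with S(4) show "y \<in> iterated_joins K (card B)"
      by blast
  qed
  then have "convex hull K = iterated_joins K (card B)"
    using iterated_joins_subset_convex_hull by blast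
  then show ?thesis
    using compact_iterated_joins[OF assms(3)] by simp
qed

lemma compact_convex_strict_separation:
  fixes C :: "'a::real_inner set"
  assumes "compact C" "convex C" "y \<notin> C"
  obtains c where "\<And>z. z \<in> C \<Longrightarrow> inner c z < inner c y"
proof (cases "C = {}")
  case False
  have "continuous_on C (dist y)"
    by (intro continuous_intros)
  then obtain p where p: "p \<in> C" "\<forall>z\<in>C. dist y p \<le> dist y z"
    using continuous_attains_inf[OF assms(1) False] by blast
  have "inner (y - p) z < inner (y - p) y" if "z \<in> C" for z
  proof -
    have "inner (y - p) (z - p) \<le> 0"
      using any_closest_point_dot[OF assms(2) compact_imp_closed[OF assms(1)] p(1) that p(2)] .
    moreover have "inner (y - p) (y - p) > 0"
      using p(1) assms(3) by auto
    ultimately show ?thesis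
      by (simp add: inner_diff_right)
  qed
  then show thesis by (rule that)
qed (use that in blast)

lemma FTvN_norm_eq:
  assumes "FTvN lam"
  shows "norm (lam x) = norm x"
  using assms unfolding FTvN_def by blast

lemma FTvN_inner_le:
  assumes "FTvN lam"
  shows "inner x y \<le> inner (lam x) (lam y)"
  using assms unfolding FTvN_def by blast

lemma FTvN_commuting_in_orbit:
  assumes "FTvN lam"
  obtains z where "z \<in> orbit lam x" "inner c z = inner (lam c) (lam x)"
proof -
  obtain z where "lam z = lam x" "inner c z = inner (lam c) (lam z)"
    using assms unfolding FTvN_def by blast
  then show thesis using that by (simp add: orbit_def)
qed

lemma FTvN_dist_le:
  assumes "FTvN lam"
  shows "dist (lam x) (lam y) \<le> dist x y"
proof -
  have "(dist (lam x) (lam y))\<^sup>2 = (norm (lam x))\<^sup>2 + (norm (lam y))\<^sup>2 - 2 * inner (lam x) (lam y)"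
    by (simp add: dist_norm power2_norm_eq_inner inner_diff_left inner_diff_right inner_commute)
  also have "\<dots> \<le> (norm x)\<^sup>2 + (norm y)\<^sup>2 - 2 * inner x y"
    using FTvN_norm_eq[OF assms] FTvN_inner_le[OF assms, of x y] by simp
  also have "\<dots> = (dist x y)\<^sup>2"
    by (simp add: dist_norm power2_norm_eq_inner inner_diff_left inner_diff_right inner_commute)
  finally show ?thesis
    by (rule power2_le_imp_le) simp
qed

lemma FTvN_continuous:
  assumes "FTvN lam"
  shows "continuous_on UNIV lam"
  by (rule lipschitz_on_continuous_on[of 1]) (simp add: lipschitz_on_def FTvN_dist_le[OF assms])

lemma orbit_self [simp]: "x \<in> orbit lam x"
  by (simp add: orbit_def)

lemma closed_orbit:
  assumes "FTvN lam"
  shows "closed (orbit lam x)"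
  unfolding orbit_def using FTvN_continuous[OF assms]
  by (intro closed_Collect_eq) auto

lemma norm_orbit:
  assumes "FTvN lam" "z \<in> orbit lam x"
  shows "norm z = norm x"
  using assms FTvN_norm_eq[OF assms(1), of z] FTvN_norm_eq[OF assms(1), of x]
  unfolding orbit_def by simp

lemma bounded_orbit:
  assumes "FTvN lam"
  shows "bounded (orbit lam x)"
  using norm_orbit[OF assms] by (auto simp: bounded_iff)

lemma orbit_central:
  assumes "FTvN lam" "u \<in> center lam"
  shows "orbit lam u = {u}"
proof -
  have "z = u" if "z \<in> orbit lam u" for z
  proof -
    have "inner u z = inner (lam u) (lam u)"
      using assms(2) that unfolding center_def commute_def orbit_def by auto
    also have "\<dots> = (norm u)\<^sup>2"
      by (metis FTvN_norm_eq[OF assms(1)] power2_norm_eq_inner)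
    finally have "inner u z = (norm u)\<^sup>2" .
    moreover have "norm z = norm u"
      using norm_orbit[OF assms(1) that] .
    ultimately have "(norm (u - z))\<^sup>2 = 0"
      using dot_norm_neg[of u z] by simp
    then show ?thesis by simp
  qed
  then show ?thesis by auto
qed

lemma majorized_in_halfspace:
  assumes "majorized lam y c" "\<And>z. z \<in> orbit lam c \<Longrightarrow> inner a z \<le> b"
  shows "inner a y \<le> b"
proof -
  have "convex hull (orbit lam c) \<subseteq> {z. inner a z \<le> b}"
    using assms(2) by (intro hull_minimal) (auto simp: convex_halfspace_le)
  then show ?thesis using assms(1) unfolding majorized_def by auto
qed

lemma majorized_inner_le:
  assumes "FTvN lam" "majorized lam y c"
  shows "inner x y \<le> inner (lam x) (lam c)"
proof (rule majorized_in_halfspace[OF assms(2)])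
  fix z assume "z \<in> orbit lam c"
  then show "inner x z \<le> inner (lam x) (lam c)"
    using FTvN_inner_le[OF assms(1), of x z] by (simp add: orbit_def)
qed

lemma majorized_inner_central:
  assumes "majorized lam y c" "u \<in> center lam"
  shows "inner u y = inner u c"
proof -
  have orbit_eq: "inner u z = inner u c" if "z \<in> orbit lam c" for z
  proof -
    have "inner u z = inner (lam u) (lam z)" "inner u c = inner (lam u) (lam c)"
      using assms(2) by (simp_all add: center_def commute_def)
    with that show ?thesis
      by (simp add: orbit_def)
  qed
  have "inner u y \<le> inner u c"
    using orbit_eq by (intro majorized_in_halfspace[OF assms(1)]) (metis order_refl)
  moreover have "inner (- u) y \<le> inner (- u) c"
    using orbit_eq by (intro majorized_in_halfspace[OF assms(1)]) (metis inner_minus_left order_refl)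
  ultimately show ?thesis
    by simp
qed

lemma majorized_central:
  assumes "FTvN lam" "majorized lam y u" "u \<in> center lam"
  shows "y = u"
  using assms(2) orbit_central[OF assms(1,3)] by (simp add: majorized_def)

lemma majorized_spectral:
  assumes "convex K" "spectral lam K" "c \<in> K" "majorized lam y c"
  shows "y \<in> K"
proof -
  have "convex hull (orbit lam c) \<subseteq> K"
    using assms(1-3) unfolding spectral_def by (intro hull_minimal) auto
  then show ?thesis using assms(4) unfolding majorized_def by auto
qed

lemma compact_convex_hull_orbit:
  fixes B :: "'v::real_inner set" and lam :: "'v \<Rightarrow> 'w::real_inner"
  assumes "FTvN lam" "finite B" "span B = UNIV"
  shows "compact (convex hull (orbit lam x))"
  using assms
  by (intro compact_convex_hull_finite_span compact_if_closed_bounded_finite_span closed_orbit bounded_orbit)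

lemma doubly_stochastic_majorized:
  "doubly_stochastic lam D \<Longrightarrow> majorized lam (D x) x"
  by (simp add: doubly_stochastic_def)

lemma adjoint_majorized_if_compact_hull:
  assumes "FTvN lam" "doubly_stochastic lam D" "\<forall>x y. inner (Dadj x) y = inner x (D y)"
    and "compact (convex hull (orbit lam x))"
  shows "majorized lam (Dadj x) x"
  unfolding majorized_def
proof (rule ccontr)
  assume "Dadj x \<notin> convex hull (orbit lam x)"
  then obtain c where c: "\<And>z. z \<in> convex hull (orbit lam x) \<Longrightarrow> inner c z < inner c (Dadj x)"
    using compact_convex_strict_separation[OF assms(4) convex_convex_hull] by blast
  obtain z where z: "z \<in> orbit lam x" "inner c z = inner (lam c) (lam x)"
    using FTvN_commuting_in_orbit[OF assms(1)] .
  have "inner (lam c) (lam x) < inner c (Dadj x)"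
    using c[OF hull_inc[OF z(1)]] z(2) by simp
  also have "\<dots> = inner x (D c)"
    using assms(3) by (simp add: inner_commute)
  also have "\<dots> \<le> inner (lam x) (lam c)"
    using majorized_inner_le[OF assms(1) doubly_stochastic_majorized[OF assms(2)]] .
  finally show False
    by (simp add: inner_commute)
qed

lemma doubly_stochastic_image_subset:
  assumes "doubly_stochastic lam D" "convex K" "spectral lam K"
  shows "D ` K \<subseteq> K"
  using majorized_spectral[OF assms(2,3) _ doubly_stochastic_majorized[OF assms(1)]] by blast

lemma doubly_stochastic_fixes_center:
  assumes "FTvN lam" "doubly_stochastic lam D" "u \<in> center lam"
  shows "D u = u"
  using majorized_central[OF assms(1) doubly_stochastic_majorized[OF assms(2)] assms(3)] .

lemma adjoint_fixes_center:
  assumes "doubly_stochastic lam D" "\<forall>x y. inner (Dadj x) y = inner x (D y)" "u \<in> center lam"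
  shows "Dadj u = u"
proof -
  have "inner (Dadj u - u) y = 0" for y
    using assms(2) majorized_inner_central[OF doubly_stochastic_majorized[OF assms(1)] assms(3)]
    by (simp add: inner_diff_left)
  then show ?thesis
    by (metis inner_eq_zero_iff right_minus_eq)
qed

lemma unit_element_in_center: "unit_element lam e \<Longrightarrow> e \<in> center lam"
  unfolding unit_element_def by (metis rangeI scaleR_one)

theorem proposition9p2:
  fixes lam :: "'v::real_inner \<Rightarrow> 'w::real_inner" and D Dadj :: "'v \<Rightarrow> 'v"
  assumes "FTvN lam"
    and "doubly_stochastic lam D"
    and "\<forall>x y. inner (Dadj x) y = inner x (D y)"
  shows "(\<forall>K. convex K \<and> spectral lam K \<longrightarrow> D ` K \<subseteq> K)
     \<and> (\<forall>u\<in>center lam. D u = u \<and> Dadj u = u)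
     \<and> (\<forall>e. unit_element lam e \<longrightarrow> D e = e \<and> Dadj e = e)
     \<and> ((\<exists>B. finite B \<and> span B = (UNIV :: 'v set)) \<longrightarrow> (\<forall>x. majorized lam (Dadj x) x))"
proof (intro conjI)
  show "\<forall>K. convex K \<and> spectral lam K \<longrightarrow> D ` K \<subseteq> K"
    using doubly_stochastic_image_subset[OF assms(2)] by blast
  show "\<forall>u\<in>center lam. D u = u \<and> Dadj u = u"
    using doubly_stochastic_fixes_center[OF assms(1,2)] adjoint_fixes_center[OF assms(2,3)] by blast
  then show "\<forall>e. unit_element lam e \<longrightarrow> D e = e \<and> Dadj e = e"
    using unit_element_in_center by blast
  show "(\<exists>B. finite B \<and> span B = (UNIV :: 'v set)) \<longrightarrow> (\<forall>x. majorized lam (Dadj x) x)"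
    using compact_convex_hull_orbit[OF assms(1)] adjoint_majorized_if_compact_hull[OF assms] by blast
qed

end
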